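(* There exists a point $x\in\{0,1\}^{\mathbb{N}}$ such that, for the full shift $(\{0,1\}^{\mathbb{N}},S)$, the set of ergodic measures appearing in the ergodic decompositions of members of $V(x)$ is strictly bigger than the set of ergodic measures appearing in the ergodic decompositions of members of $V^{\log}(x)$.
   Context: $S$ is the left shift. For $N\ge1$ let $\mathrm{Emp}(x,N)=\frac1N\sum_{n=1}^N\delta_{S^{n-1}(x)}$, and for $N\ge2$ let $\mathrm{Emp}^{\log}(x,N)=\frac1{\log N}\sum_{n=1}^N\frac1n\delta_{S^{n-1}(x)}$. $V(x)$ (resp. $V^{\log}(x)$) is the set of Borel probability measures $\nu$ such that $\mathrm{Emp}(x,N_k)\to\nu$ (resp. $\mathrm{Emp}^{\log}(x,N_k)\to\nu$) weak-$*$ for some increasing sequence $(N_k)$; these consist of $S$-invariant measures, each of which has an ergodic decomposition. *)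

theory Defs
  imports "HOL-Analysis.Analysis" "HOL-Probability.Probability"
begin

text \<open>The full shift on the Cantor space {0,1}^N, modelled as nat => bool with the
product topology (bool discrete); Borel sets = product sigma-algebra.\<close>

type_synonym cantor = "nat \<Rightarrow> bool"

definition shift :: "cantor \<Rightarrow> cantor" where
  "shift x = (\<lambda>n. x (Suc n))"

definition borel_prob :: "cantor measure \<Rightarrow> bool" where
  "borel_prob \<nu> \<longleftrightarrow> prob_space \<nu> \<and> sets \<nu> = sets borel"

text \<open>Weak-star convergence of Emp(x, N_k) to nu, unfolded: for every continuous f,
  (1/N_k) sum_{n=1}^{N_k} f(S^(n-1) x) tends to the integral of f w.r.t. nu.\<close>
definition V :: "cantor \<Rightarrow> cantor measure set" where
  "V x = {\<nu>. borel_prob \<nu> \<and>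
     (\<exists>N :: nat \<Rightarrow> nat. strict_mono N \<and> (\<forall>k. N k \<ge> 1) \<and>
        (\<forall>f :: cantor \<Rightarrow> real. continuous_on UNIV f \<longrightarrow>
           (\<lambda>k. (1 / real (N k)) * (\<Sum>n=1..N k. f ((shift ^^ (n - 1)) x)))
             \<longlonglongrightarrow> integral\<^sup>L \<nu> f))}"

definition Vlog :: "cantor \<Rightarrow> cantor measure set" where
  "Vlog x = {\<nu>. borel_prob \<nu> \<and>
     (\<exists>N :: nat \<Rightarrow> nat. strict_mono N \<and> (\<forall>k. N k \<ge> 2) \<and>
        (\<forall>f :: cantor \<Rightarrow> real. continuous_on UNIV f \<longrightarrow>
           (\<lambda>k. (1 / ln (real (N k))) * (\<Sum>n=1..N k. (1 / real n) * f ((shift ^^ (n - 1)) x)))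
             \<longlonglongrightarrow> integral\<^sup>L \<nu> f))}"

definition invariant_measure :: "cantor measure \<Rightarrow> bool" where
  "invariant_measure \<mu> \<longleftrightarrow> borel_prob \<mu> \<and>
     (\<forall>A \<in> sets borel. emeasure \<mu> (shift -` A) = emeasure \<mu> A)"

definition ergodic_measure :: "cantor measure \<Rightarrow> bool" where
  "ergodic_measure \<mu> \<longleftrightarrow> invariant_measure \<mu> \<and>
     (\<forall>A \<in> sets borel. shift -` A = A \<longrightarrow> emeasure \<mu> A = 0 \<or> emeasure \<mu> A = 1)"

text \<open>An ergodic decomposition of nu: a probability measure P on the (Giry) space of
  Borel (sub)probability measures, concentrated on ergodic measures, with
  nu = integral of mu dP(mu) (i.e. nu = join P).\<close>
definition ergodic_decomposition :: "cantor measure \<Rightarrow> cantor measure measure \<Rightarrow> bool" where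
  "ergodic_decomposition \<nu> P \<longleftrightarrow>
     sets P = sets (subprob_algebra borel) \<and> prob_space P \<and>
     (AE \<mu> in P. ergodic_measure \<mu>) \<and> join P = \<nu>"

text \<open>Topological support of P with respect to the weak-star topology on measures:
  every basic weak-star neighbourhood of mu has positive P-measure.\<close>
definition in_weak_support :: "cantor measure measure \<Rightarrow> cantor measure \<Rightarrow> bool" where
  "in_weak_support P \<mu> \<longleftrightarrow>
     (\<forall>F :: (cantor \<Rightarrow> real) set. \<forall>\<epsilon>::real.
        finite F \<and> (\<forall>f\<in>F. continuous_on UNIV f) \<and> \<epsilon> > 0 \<longrightarrow>
        emeasure P {\<eta> \<in> space P. \<forall>f\<in>F. \<bar>integral\<^sup>L \<eta> f - integral\<^sup>L \<mu> f\<bar> < \<epsilon>} > 0)"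

definition ergodic_components :: "cantor measure set \<Rightarrow> cantor measure set" where
  "ergodic_components W = {\<mu>. ergodic_measure \<mu> \<and>
     (\<exists>\<nu>\<in>W. \<exists>P. ergodic_decomposition \<nu> P \<and> in_weak_support P \<mu>)}"

end

theory Submission
  imports Defs "HOL-Real_Asymp.Real_Asymp"
begin

(* The point has ones exactly on the blocks [a_k, k a_k), where a_k = 4^(k^4). As k a_k is tiny
   compared to a_(k+1), the Cesaro averages along N = a_(k+1) see almost only zeros and tend to the
   Dirac mass at the all-zeros point, while along N = (k+1) a_(k+1) the last block dominates and they
   tend to the Dirac mass at the all-ones point; being a fixed point of the shift, that mass is its
   own ergodic decomposition.  The logarithmic weight of the k-th block is at most k, which is
   negligible against log a_k = k^4 log 4, so the logarithmic averages tend to the all-zeros Dirac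
   mass along the full sequence.  Hence V^log(x) is contained in V(x), and each of its members gives
   measure zero to the cylinder {y. y 0}, which keeps the all-ones Dirac mass out of the weak support
   of every ergodic decomposition of such a member. *)

lemma compact_cantor: "compact (UNIV :: cantor set)"
proof -
  have "compact_space (euclidean :: bool topology)"
    unfolding compact_space_def by (simp add: finite_imp_compact)
  then have "compact_space (product_topology (\<lambda>i::nat. euclidean::bool topology) UNIV)"
    by (simp add: compact_space_product_topology)
  then show ?thesis
    unfolding euclidean_product_topology compact_space_def by simp
qed

lemma continuous_on_cantor_bounded:
  fixes f :: "cantor \<Rightarrow> real"
  assumes "continuous_on UNIV f"
  obtains B where "\<And>y. \<bar>f y\<bar> \<le> B"
proof -
  have "bounded (range f)"
    by (rule compact_imp_bounded[OF compact_continuous_image[OF assms compact_cantor]])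
  then show ?thesis using that by (auto simp: bounded_iff)
qed

lemma continuous_on_cantor_cylinder:
  fixes f :: "cantor \<Rightarrow> real"
  assumes "continuous_on UNIV f" "e > 0"
  obtains m where "\<And>y. (\<forall>i<m. y i = z i) \<Longrightarrow> \<bar>f y - f z\<bar> < e"
proof -
  have "open (f -` ball (f z) e)"
    using assms(1) by (simp add: continuous_on_open_vimage)
  then have open_preimage: "openin (product_topology (\<lambda>i. euclidean) UNIV) (f -` ball (f z) e)"
    by (simp add: open_fun_def)
  have z: "z \<in> f -` ball (f z) e" using assms(2) by simp
  obtain U where U: "finite {i \<in> UNIV. U i \<noteq> topspace euclidean}"
      "z \<in> Pi\<^sub>E UNIV U" "Pi\<^sub>E UNIV U \<subseteq> f -` ball (f z) e"
    using bspec[OF open_preimage[unfolded openin_product_topology_alt] z] by (elim exE conjE) (rule that)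
  have "finite {i. U i \<noteq> UNIV}" using U(1) by simp
  then obtain m where "{i. U i \<noteq> UNIV} \<subseteq> {..<m}" using finite_nat_bounded by blast
  then have m: "\<And>i. U i \<noteq> UNIV \<Longrightarrow> i < m" by auto
  show ?thesis
  proof (rule that)
    fix y :: cantor assume y: "\<forall>i<m. y i = z i"
    have "y i \<in> U i" for i
    proof (cases "U i = UNIV")
      case False
      then have "y i = z i" using y m by blast
      moreover have "z i \<in> U i" using U(2) by (simp add: PiE_iff)
      ultimately show ?thesis by simp
    qed simp
    then have "y \<in> Pi\<^sub>E UNIV U" by (simp add: PiE_iff)
    then have "f y \<in> ball (f z) e" using U(3) by blast
    then show "\<bar>f y - f z\<bar> < e" by (simp add: dist_real_def abs_minus_commute)
  qed
qed

lemma funpow_shift: "(shift ^^ j) y i = y (i + j)"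
  by (induction j arbitrary: y i) (auto simp: shift_def funpow_Suc_right)

lemma shift_borel_measurable: "shift \<in> borel_measurable borel"
  unfolding shift_def by (intro borel_measurable_continuous_onI continuous_intros) simp

lemma weighted_sum_deviation_le:
  fixes g w :: "nat \<Rightarrow> real"
  assumes "finite A" and "\<And>n. w n \<ge> 0" and "\<And>n. \<bar>g n - c\<bar> \<le> K" and "\<epsilon> \<ge> 0"
    and "\<And>n. Q n \<Longrightarrow> \<bar>g n - c\<bar> \<le> \<epsilon>"
  shows "\<bar>\<Sum>n\<in>A. w n * (g n - c)\<bar> \<le> \<epsilon> * (\<Sum>n\<in>A. w n) + K * (\<Sum>n\<in>{n\<in>A. \<not> Q n}. w n)"
proof -
  have pointwise: "\<bar>w n * (g n - c)\<bar> \<le> \<epsilon> * w n + K * (if Q n then 0 else w n)" for n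
  proof -
    have "\<bar>g n - c\<bar> \<le> \<epsilon> + (if Q n then 0 else K)"
      using assms(3)[of n] assms(4) assms(5)[of n] by auto
    then have "w n * \<bar>g n - c\<bar> \<le> w n * (\<epsilon> + (if Q n then 0 else K))"
      using assms(2)[of n] by (rule mult_left_mono)
    also have "\<dots> = \<epsilon> * w n + K * (if Q n then 0 else w n)"
      by (simp add: algebra_simps)
    finally show ?thesis
      using assms(2)[of n] by (simp add: abs_mult)
  qed
  have "\<bar>\<Sum>n\<in>A. w n * (g n - c)\<bar> \<le> (\<Sum>n\<in>A. \<epsilon> * w n + K * (if Q n then 0 else w n))"
    by (rule order_trans[OF sum_abs sum_mono]) (rule pointwise)
  also have "\<dots> = \<epsilon> * (\<Sum>n\<in>A. w n) + K * (\<Sum>n\<in>A. if Q n then 0 else w n)"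
    by (simp add: sum.distrib sum_distrib_left)
  also have "(\<Sum>n\<in>A. if Q n then 0 else w n) = (\<Sum>n\<in>{n\<in>A. \<not> Q n}. w n)"
    using assms(1) by (subst sum.inter_filter) (auto intro!: sum.cong)
  finally show ?thesis .
qed

lemma weighted_average_tendsto:
  fixes g w D :: "nat \<Rightarrow> real" and N :: "nat \<Rightarrow> nat" and P :: "nat \<Rightarrow> nat \<Rightarrow> bool"
  assumes bounded: "\<And>n. \<bar>g n\<bar> \<le> B" and w_nonneg: "\<And>n. w n \<ge> 0" and D_pos: "\<And>k. D k > 0"
    and total: "(\<lambda>k. (\<Sum>n=1..N k. w n) / D k) \<longlonglongrightarrow> 1"
    and close: "\<And>e. e > 0 \<Longrightarrow> \<exists>m. \<forall>n. P m n \<longrightarrow> \<bar>g n - c\<bar> \<le> e"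
    and negligible: "\<And>m. (\<lambda>k. (\<Sum>n\<in>{n\<in>{1..N k}. \<not> P m n}. w n) / D k) \<longlonglongrightarrow> 0"
  shows "(\<lambda>k. 1 / D k * (\<Sum>n=1..N k. w n * g n)) \<longlonglongrightarrow> c"
proof (rule tendstoI)
  fix e :: real assume "e > 0"
  then obtain m where m: "\<And>n. P m n \<Longrightarrow> \<bar>g n - c\<bar> \<le> e / 2"
    using close[of "e / 2"] by auto
  define K where "K = B + \<bar>c\<bar>"
  define W where "W k = (\<Sum>n=1..N k. w n)" for k
  define Wbad where "Wbad k = (\<Sum>n\<in>{n\<in>{1..N k}. \<not> P m n}. w n)" for k
  define R where "R k = e / 2 * (W k / D k) + K * (Wbad k / D k) + \<bar>c\<bar> * \<bar>W k / D k - 1\<bar>" for k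
  have estimate: "\<bar>1 / D k * (\<Sum>n=1..N k. w n * g n) - c\<bar> \<le> R k" for k
  proof -
    have sum_bound: "\<bar>\<Sum>n=1..N k. w n * (g n - c)\<bar> \<le> e / 2 * W k + K * Wbad k"
      unfolding W_def Wbad_def
    proof (rule weighted_sum_deviation_le)
      show "\<bar>g n - c\<bar> \<le> K" for n using bounded[of n] by (simp add: K_def abs_triangle_ineq4 add_mono)
    qed (use w_nonneg m \<open>e > 0\<close> in auto)
    have "1 / D k * (\<Sum>n=1..N k. w n * g n) - c = (\<Sum>n=1..N k. w n * (g n - c)) / D k + c * (W k / D k - 1)"
      using D_pos[of k] by (simp add: W_def field_simps sum_subtractf sum_distrib_left sum_divide_distrib)
    also have "\<bar>\<dots>\<bar> \<le> (e / 2 * W k + K * Wbad k) / D k + \<bar>c\<bar> * \<bar>W k / D k - 1\<bar>"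
      using sum_bound D_pos[of k]
      by (intro order_trans[OF abs_triangle_ineq add_mono]) (auto simp: abs_mult divide_right_mono)
    finally show ?thesis by (simp add: R_def add_divide_distrib)
  qed
  have "R \<longlonglongrightarrow> e / 2 * 1 + K * 0 + \<bar>c\<bar> * \<bar>1 - 1\<bar>"
    unfolding R_def W_def Wbad_def by (intro tendsto_intros total negligible)
  then have "eventually (\<lambda>k. R k < e) sequentially"
    by (rule order_tendstoD(2)) (use \<open>e > 0\<close> in simp)
  then show "eventually (\<lambda>k. dist (1 / D k * (\<Sum>n=1..N k. w n * g n)) c < e) sequentially"
    by eventually_elim (use estimate in \<open>auto simp: dist_real_def intro: le_less_trans\<close>)
qed

lemma orbit_weighted_average_tendsto:
  fixes f :: "cantor \<Rightarrow> real" and w D :: "nat \<Rightarrow> real" and N :: "nat \<Rightarrow> nat"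
  assumes f: "continuous_on UNIV f" and "\<And>n. w n \<ge> 0" and "\<And>k. D k > 0"
    and "(\<lambda>k. (\<Sum>n=1..N k. w n) / D k) \<longlonglongrightarrow> 1"
    and "\<And>m. (\<lambda>k. (\<Sum>n\<in>{n\<in>{1..N k}. \<not> (\<forall>i<m. x (i + (n - 1)) = z i)}. w n) / D k) \<longlonglongrightarrow> 0"
  shows "(\<lambda>k. 1 / D k * (\<Sum>n=1..N k. w n * f ((shift ^^ (n - 1)) x))) \<longlonglongrightarrow> f z"
proof -
  obtain B where "\<And>y. \<bar>f y\<bar> \<le> B" using continuous_on_cantor_bounded[OF f] by blast
  then show ?thesis
  proof (rule weighted_average_tendsto[where P = "\<lambda>m n. \<forall>i<m. x (i + (n - 1)) = z i"])
    fix e :: real assume "e > 0"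
    then obtain m where "\<And>y. (\<forall>i<m. y i = z i) \<Longrightarrow> \<bar>f y - f z\<bar> < e"
      using continuous_on_cantor_cylinder[OF f] by blast
    then show "\<exists>m. \<forall>n. (\<forall>i<m. x (i + (n - 1)) = z i) \<longrightarrow> \<bar>f ((shift ^^ (n - 1)) x) - f z\<bar> \<le> e"
      by (metis funpow_shift less_imp_le)
  qed (use assms in auto)
qed

lemma orbit_average_tendsto:
  fixes f :: "cantor \<Rightarrow> real" and N :: "nat \<Rightarrow> nat"
  assumes "continuous_on UNIV f" and "\<And>k. N k > 0"
    and "\<And>m. (\<lambda>k. real (card {n\<in>{1..N k}. \<not> (\<forall>i<m. x (i + (n - 1)) = z i)}) / real (N k)) \<longlonglongrightarrow> 0"
  shows "(\<lambda>k. 1 / real (N k) * (\<Sum>n=1..N k. f ((shift ^^ (n - 1)) x))) \<longlonglongrightarrow> f z"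
proof -
  have "(\<lambda>k. 1 / real (N k) * (\<Sum>n=1..N k. 1 * f ((shift ^^ (n - 1)) x))) \<longlonglongrightarrow> f z"
  proof (rule orbit_weighted_average_tendsto)
    have "(\<Sum>n=1..N k. 1) / real (N k) = 1" for k
      using assms(2)[of k] by simp
    then show "(\<lambda>k. (\<Sum>n=1..N k. 1) / real (N k)) \<longlonglongrightarrow> 1" by simp
  qed (use assms in simp_all)
  then show ?thesis by simp
qed

lemma closed_coordinate_eq: "closed {y :: cantor. y i = b}"
  by (rule closed_Collect_eq) (auto intro: continuous_intros)

lemma singleton_sets_borel_cantor: "{z :: cantor} \<in> sets borel"
proof -
  have "{z} = (\<Inter>i. {y :: cantor. y i = z i})" by auto
  then show ?thesis using closed_coordinate_eq by (simp add: borel_closed closed_INT)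
qed

lemma return_in_space_subprob_algebra: "return borel (z :: cantor) \<in> space (subprob_algebra borel)"
  by (simp add: space_subprob_algebra subprob_space_return)

lemma ergodic_measure_return:
  assumes "shift z = z"
  shows "ergodic_measure (return borel z)"
  unfolding ergodic_measure_def invariant_measure_def borel_prob_def
proof (intro conjI ballI impI)
  fix A :: "cantor set" assume A: "A \<in> sets borel"
  then have "shift -` A \<in> sets borel"
    using measurable_sets[OF shift_borel_measurable A] by simp
  then show "emeasure (return borel z) (shift -` A) = emeasure (return borel z) A"
    using A assms by (simp add: emeasure_return indicator_def)
  show "emeasure (return borel z) A = 0 \<or> emeasure (return borel z) A = 1"
    using A by (simp add: emeasure_return indicator_def)
qed (simp_all add: prob_space_return)

lemma subprob_eq_return_if_emeasure_singleton:
  assumes \<mu>: "\<mu> \<in> space (subprob_algebra borel)" and one: "emeasure \<mu> {z} = 1"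
  shows "\<mu> = return borel (z :: cantor)"
proof (rule measure_eqI)
  have sub: "subprob_space \<mu>" and sets: "sets \<mu> = sets borel"
    using \<mu> by (auto simp: space_subprob_algebra)
  show "sets \<mu> = sets (return borel z)" using sets by simp
  fix A assume A: "A \<in> sets \<mu>"
  have le1: "emeasure \<mu> B \<le> 1" for B by (rule subprob_space.subprob_emeasure_le_1[OF sub])
  show "emeasure \<mu> A = emeasure (return borel z) A"
  proof (cases "z \<in> A")
    case True
    have "emeasure \<mu> {z} \<le> emeasure \<mu> A" using A True by (intro emeasure_mono) auto
    then have "emeasure \<mu> A = 1" using le1[of A] one by (intro order.antisym) simp_all
    then show ?thesis using A sets True by (simp add: emeasure_return)
  next
    case False
    have "{z} \<in> sets \<mu>" using sets singleton_sets_borel_cantor by simp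
    then have "emeasure \<mu> (A \<union> {z}) = emeasure \<mu> A + 1"
      using A False one by (subst plus_emeasure[symmetric]) auto
    then have "1 + emeasure \<mu> A \<le> 1 + 0" using le1[of "A \<union> {z}"] by (simp add: add.commute)
    then have "emeasure \<mu> A = 0" unfolding ennreal_add_left_cancel_le by simp
    then show ?thesis using A sets False by (simp add: emeasure_return)
  qed
qed

lemma ergodic_decomposition_return:
  assumes "shift z = z"
  shows "ergodic_decomposition (return borel z) (return (subprob_algebra borel) (return borel z))"
  unfolding ergodic_decomposition_def
proof (intro conjI)
  let ?P = "return (subprob_algebra borel) (return borel z)"
  have "Measurable.pred (subprob_algebra borel) (\<lambda>\<mu>. emeasure \<mu> {z} = 1)"
    by (rule pred_eq_const1[OF measurable_emeasure_subprob_algebra[OF singleton_sets_borel_cantor]]) simp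
  then have "AE \<mu> in ?P. emeasure \<mu> {z} = 1"
    using AE_return[OF return_in_space_subprob_algebra] by (simp add: emeasure_return singleton_sets_borel_cantor)
  moreover have "AE \<mu> in ?P. \<mu> \<in> space (subprob_algebra borel)"
    using AE_space[of ?P] by simp
  ultimately show "AE \<mu> in ?P. ergodic_measure \<mu>"
  proof eventually_elim
    case (elim \<mu>)
    then have "\<mu> = return borel z" by (intro subprob_eq_return_if_emeasure_singleton)
    then show ?case using ergodic_measure_return[OF assms] by simp
  qed
  show "join ?P = return borel z"
    by (rule join_return) (auto simp: subprob_space_return)
qed (simp_all add: prob_space_return return_in_space_subprob_algebra)

lemma in_weak_support_return:
  assumes \<delta>: "\<delta> \<in> space (subprob_algebra borel)"
  shows "in_weak_support (return (subprob_algebra borel) \<delta>) \<delta>"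
  unfolding in_weak_support_def
proof (intro allI impI)
  fix F :: "(cantor \<Rightarrow> real) set" and e :: real
  assume F: "finite F \<and> (\<forall>f\<in>F. continuous_on UNIV f) \<and> e > 0"
  define S where "S = {\<eta> \<in> space (subprob_algebra borel). \<forall>f\<in>F. \<bar>integral\<^sup>L \<eta> f - integral\<^sup>L \<delta> f\<bar> < e}"
  have "S \<in> sets (subprob_algebra borel)"
    unfolding S_def
  proof (rule sets.sets_Collect_finite_All)
    fix f assume "f \<in> F"
    then have [measurable]: "f \<in> borel_measurable borel"
      using F borel_measurable_continuous_onI by blast
    show "{\<eta> \<in> space (subprob_algebra borel). \<bar>integral\<^sup>L \<eta> f - integral\<^sup>L \<delta> f\<bar> < e} \<in> sets (subprob_algebra borel)"
      by measurable
  qed (use F in simp)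
  moreover have "\<delta> \<in> S" using \<delta> F by (simp add: S_def)
  ultimately show "emeasure (return (subprob_algebra borel) \<delta>) {\<eta> \<in> space (return (subprob_algebra borel) \<delta>).
      \<forall>f\<in>F. \<bar>integral\<^sup>L \<eta> f - integral\<^sup>L \<delta> f\<bar> < e} > 0"
    by (simp add: S_def emeasure_return)
qed

lemma ergodic_components_mono: "W \<subseteq> W' \<Longrightarrow> ergodic_components W \<subseteq> ergodic_components W'"
  unfolding ergodic_components_def by blast

lemma return_in_ergodic_components:
  assumes "shift z = z" and "return borel z \<in> W"
  shows "return borel z \<in> ergodic_components W"
  unfolding ergodic_components_def
  using assms ergodic_measure_return ergodic_decomposition_return
    in_weak_support_return[OF return_in_space_subprob_algebra] by blast

lemma continuous_on_indicator_first_coordinate: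
  "continuous_on UNIV (indicator {y :: cantor. y 0} :: cantor \<Rightarrow> real)"
proof -
  have "(indicator {y :: cantor. y 0} :: cantor \<Rightarrow> real) = (\<lambda>b. if b then 1 else 0) \<circ> (\<lambda>y. y 0)"
    by (auto simp: indicator_def)
  moreover have "continuous_on UNIV (\<lambda>b :: bool. if b then 1 else (0 :: real))"
    by (simp add: continuous_on_discrete)
  ultimately show ?thesis
    by (metis continuous_on_compose continuous_on_product_coordinates continuous_on_subset subset_UNIV)
qed

lemma AE_emeasure_eq_0_of_join:
  assumes sets_P: "sets P = sets (subprob_algebra M)" and A: "A \<in> sets M"
    and null: "emeasure (join P) A = 0"
  shows "AE \<eta> in P. emeasure \<eta> A = 0"
proof -
  have "(\<integral>\<^sup>+ \<eta>. emeasure \<eta> A \<partial>P) = 0"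
    using emeasure_join[OF sets_P A] null by simp
  moreover have "(\<lambda>\<eta>. emeasure \<eta> A) \<in> borel_measurable P"
    using measurable_emeasure_subprob_algebra[OF A] unfolding measurable_cong_sets[OF sets_P refl] .
  ultimately show ?thesis by (simp add: nn_integral_0_iff_AE)
qed

lemma integral_eq_if_in_weak_support:
  fixes f :: "cantor \<Rightarrow> real"
  assumes support: "in_weak_support P \<mu>" and f: "continuous_on UNIV f"
    and ae: "AE \<eta> in P. integral\<^sup>L \<eta> f = c"
  shows "integral\<^sup>L \<mu> f = c"
proof (rule ccontr)
  assume "integral\<^sup>L \<mu> f \<noteq> c"
  define e where "e = \<bar>c - integral\<^sup>L \<mu> f\<bar>"
  define S where "S = {\<eta> \<in> space P. \<forall>g\<in>{f}. \<bar>integral\<^sup>L \<eta> g - integral\<^sup>L \<mu> g\<bar> < e}"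
  have pos: "emeasure P S > 0"
    unfolding S_def using \<open>integral\<^sup>L \<mu> f \<noteq> c\<close> f
    by (intro support[unfolded in_weak_support_def, rule_format]) (simp add: e_def)
  have S: "S \<in> sets P"
  proof (rule ccontr)
    assume "S \<notin> sets P"
    then have "emeasure P S = 0" by (rule emeasure_notin_sets)
    with pos show False by simp
  qed
  have not_S: "AE \<eta> in P. \<eta> \<notin> S"
    using ae by eventually_elim (simp add: S_def e_def)
  have S_eq: "{\<eta> \<in> space P. \<not> \<eta> \<notin> S} = S" using sets.sets_into_space[OF S] by auto
  have "emeasure P S = 0" by (rule AE_iff_measurable[OF S S_eq, THEN iffD1, OF not_S])
  with pos show False by simp
qed

lemma return_notin_ergodic_components:
  assumes "z 0" and W: "\<And>\<nu>. \<nu> \<in> W \<Longrightarrow> emeasure \<nu> {y. y 0} = 0"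
  shows "return borel z \<notin> ergodic_components W"
proof
  assume "return borel z \<in> ergodic_components W"
  then obtain \<nu> P where "\<nu> \<in> W" and P: "ergodic_decomposition \<nu> P"
    and support: "in_weak_support P (return borel z)"
    unfolding ergodic_components_def by blast
  define A where "A = {y :: cantor. y 0}"
  have A: "A \<in> sets borel"
    using closed_coordinate_eq[of 0 True] unfolding A_def by (simp add: borel_closed)
  have sets_P: "sets P = sets (subprob_algebra borel)" and "join P = \<nu>"
    using P by (auto simp: ergodic_decomposition_def)
  then have "AE \<eta> in P. emeasure \<eta> A = 0"
    using W[OF \<open>\<nu> \<in> W\<close>] by (intro AE_emeasure_eq_0_of_join[OF sets_P A]) (simp add: A_def)
  moreover have "AE \<eta> in P. \<eta> \<in> space (subprob_algebra borel)"
    using AE_space[of P] sets_eq_imp_space_eq[OF sets_P] by simp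
  ultimately have "AE \<eta> in P. integral\<^sup>L \<eta> (indicator A) = (0 :: real)"
  proof eventually_elim
    case (elim \<eta>)
    then have "A \<in> sets \<eta>" using A by (simp add: space_subprob_algebra)
    then show ?case using elim(1) by (simp add: measure_def)
  qed
  then have "integral\<^sup>L (return borel z) (indicator A) = (0 :: real)"
    using continuous_on_indicator_first_coordinate unfolding A_def
    by (intro integral_eq_if_in_weak_support[OF support])
  moreover have "integral\<^sup>L (return borel z) (indicator A) = (1 :: real)"
    using A \<open>z 0\<close> by (simp add: measure_return A_def)
  ultimately show False by simp
qed

lemma V_memI:
  assumes "borel_prob \<nu>" and "strict_mono N" and "\<And>k. N k \<ge> 1"
    and "\<And>f. continuous_on UNIV f \<Longrightarrow>
           (\<lambda>k. 1 / real (N k) * (\<Sum>n=1..N k. f ((shift ^^ (n - 1)) x))) \<longlonglongrightarrow> integral\<^sup>L \<nu> f"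
  shows "\<nu> \<in> V x"
  unfolding V_def mem_Collect_eq using assms by blast

lemma Vlog_integral_eq:
  assumes "\<nu> \<in> Vlog x" and f: "continuous_on UNIV f"
    and lim: "(\<lambda>N. 1 / ln (real N) * (\<Sum>n=1..N. 1 / real n * f ((shift ^^ (n - 1)) x))) \<longlonglongrightarrow> c"
  shows "integral\<^sup>L \<nu> f = c"
proof -
  obtain N where "strict_mono N"
    and "\<forall>g :: cantor \<Rightarrow> real. continuous_on UNIV g \<longrightarrow>
           (\<lambda>k. 1 / ln (real (N k)) * (\<Sum>n=1..N k. 1 / real n * g ((shift ^^ (n - 1)) x)))
             \<longlonglongrightarrow> integral\<^sup>L \<nu> g"
    using assms(1) unfolding Vlog_def by blast
  then have "(\<lambda>k. 1 / ln (real (N k)) * (\<Sum>n=1..N k. 1 / real n * f ((shift ^^ (n - 1)) x)))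
                 \<longlonglongrightarrow> integral\<^sup>L \<nu> f"
    using f by blast
  moreover have "(\<lambda>k. 1 / ln (real (N k)) * (\<Sum>n=1..N k. 1 / real n * f ((shift ^^ (n - 1)) x))) \<longlonglongrightarrow> c"
    using LIMSEQ_subseq_LIMSEQ[OF lim \<open>strict_mono N\<close>] by (simp add: comp_def)
  ultimately show ?thesis using LIMSEQ_unique by blast
qed

lemma card_window_mismatch_le:
  fixes x :: "nat \<Rightarrow> 'a"
  assumes "\<And>j. j < T \<Longrightarrow> x j \<noteq> c \<Longrightarrow> j < L"
  shows "card {n \<in> {1..T}. \<not> (\<forall>i<m. x (i + (n - 1)) = c)} \<le> L + m"
proof -
  have "{n \<in> {1..T}. \<not> (\<forall>i<m. x (i + (n - 1)) = c)} \<subseteq> {1..L} \<union> {T + 1 - m..T}"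
  proof
    fix n assume "n \<in> {n \<in> {1..T}. \<not> (\<forall>i<m. x (i + (n - 1)) = c)}"
    then obtain i where n: "1 \<le> n" "n \<le> T" and i: "i < m" "x (i + (n - 1)) \<noteq> c" by auto
    show "n \<in> {1..L} \<union> {T + 1 - m..T}"
    proof (cases "i + (n - 1) < T")
      case True
      then show ?thesis using assms[OF True i(2)] n by auto
    qed (use n i in auto)
  qed
  then have "card {n \<in> {1..T}. \<not> (\<forall>i<m. x (i + (n - 1)) = c)} \<le> card ({1..L} \<union> {T + 1 - m..T})"
    by (intro card_mono) auto
  also have "\<dots> \<le> card {1..L} + card {T + 1 - m..T}" by (rule card_Un_le)
  also have "\<dots> \<le> L + m" by simp
  finally show ?thesis .
qed

lemma log_weight_window_hits_le:
  fixes x :: "nat \<Rightarrow> bool"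
  defines "h j \<equiv> if x j then 1 / (real j + 1) else 0"
  shows "(\<Sum>n\<in>{n\<in>{1..N}. \<not> (\<forall>i<m. x (i + (n - 1)) = False)}. 1 / real n)
           \<le> real m * real m * (\<Sum>j<N + m. h j)"
proof -
  have h_nonneg: "h j \<ge> 0" for j by (simp add: h_def)
  have hit: "1 / real n \<le> (\<Sum>i<m. real m * h (i + (n - 1)))"
    if n: "1 \<le> n" and i0: "i0 < m" "x (i0 + (n - 1))" for n i0
  proof -
    have "real i0 + real n \<le> (real i0 + 1) * real n"
      using n mult_left_mono[of 1 "real n" "real i0"] by (simp add: algebra_simps)
    also have "\<dots> \<le> real m * real n" using i0 by (intro mult_right_mono) auto
    finally have "1 / real n \<le> real m / (real i0 + real n)"
      using n by (simp add: field_simps)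
    also have "\<dots> = real m * h (i0 + (n - 1))"
      using n i0 by (simp add: h_def of_nat_diff)
    also have "\<dots> \<le> (\<Sum>i<m. real m * h (i + (n - 1)))"
      using i0 h_nonneg by (intro member_le_sum) auto
    finally show ?thesis .
  qed
  have "(\<Sum>n\<in>{n\<in>{1..N}. \<not> (\<forall>i<m. x (i + (n - 1)) = False)}. 1 / real n)
      \<le> (\<Sum>n\<in>{n\<in>{1..N}. \<not> (\<forall>i<m. x (i + (n - 1)) = False)}. \<Sum>i<m. real m * h (i + (n - 1)))"
  proof (rule sum_mono)
    fix n assume "n \<in> {n\<in>{1..N}. \<not> (\<forall>i<m. x (i + (n - 1)) = False)}"
    then obtain i0 where "1 \<le> n" "i0 < m" "x (i0 + (n - 1))" by auto
    then show "1 / real n \<le> (\<Sum>i<m. real m * h (i + (n - 1)))" by (rule hit)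
  qed
  also have "\<dots> \<le> (\<Sum>n=1..N. \<Sum>i<m. real m * h (i + (n - 1)))"
    by (intro sum_mono2 sum_nonneg mult_nonneg_nonneg h_nonneg) auto
  also have "\<dots> = (\<Sum>i<m. real m * (\<Sum>n=1..N. h (i + (n - 1))))"
    by (subst sum.swap) (simp add: sum_distrib_left)
  also have "\<dots> \<le> (\<Sum>i<m. real m * (\<Sum>j<N + m. h j))"
  proof (intro sum_mono mult_left_mono)
    fix i assume "i \<in> {..<m}"
    have "inj_on (\<lambda>n. i + (n - 1)) {1..N}" by (auto simp: inj_on_def)
    then have "(\<Sum>n=1..N. h (i + (n - 1))) = (\<Sum>j\<in>(\<lambda>n. i + (n - 1)) ` {1..N}. h j)"
      by (simp only: sum.reindex comp_def)
    also have "\<dots> \<le> (\<Sum>j<N + m. h j)"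
      using \<open>i \<in> {..<m}\<close> by (intro sum_mono2 h_nonneg) auto
    finally show "(\<Sum>n=1..N. h (i + (n - 1))) \<le> (\<Sum>j<N + m. h j)" .
  qed simp
  also have "\<dots> = real m * real m * (\<Sum>j<N + m. h j)" by simp
  finally show ?thesis .
qed

lemma harm_div_ln_tendsto: "(\<lambda>N. harm N / ln (real N) :: real) \<longlonglongrightarrow> 1"
proof -
  have "(\<lambda>N. 1 + (harm N - ln (real N)) * (1 / ln (real N)) :: real) \<longlonglongrightarrow> 1 + euler_mascheroni * 0"
    by (intro tendsto_intros euler_mascheroni_LIMSEQ) real_asymp
  moreover have "eventually (\<lambda>N. 1 + (harm N - ln (real N)) * (1 / ln (real N)) = harm N / ln (real N)) sequentially"
    using eventually_gt_at_top[of 1] by eventually_elim (simp add: field_simps)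
  ultimately show ?thesis by (simp add: Lim_transform_eventually)
qed

lemma divide_le_of_linear_bound:
  fixes C p A m q B :: real
  assumes "0 \<le> C" "C \<le> p * A + m" "q * A \<le> B" "1 \<le> A" "0 < q" "0 \<le> p" "0 \<le> m"
  shows "C / B \<le> (p + m) / q"
proof -
  have "C \<le> (p + m) * A"
    using assms(2) mult_left_mono[OF assms(4) assms(7)] by (simp add: distrib_right)
  then have "C / B \<le> (p + m) * A / (q * A)"
    using assms by (intro frac_le) auto
  then show ?thesis using assms(4) by simp
qed

definition block_start :: "nat \<Rightarrow> nat" where
  "block_start k = 4 ^ (k ^ 4)"

definition block_point :: cantor where
  "block_point j \<longleftrightarrow> (\<exists>k. block_start k \<le> j \<and> j < k * block_start k)"

lemma block_start_pos: "block_start k > 0"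
  by (simp add: block_start_def)

lemma block_start_Suc_ge: "4 ^ (k + 1) * block_start k \<le> block_start (Suc k)"
proof -
  have "k ^ 4 + (k + 1) \<le> Suc k ^ 4" by (simp add: eval_nat_numeral algebra_simps)
  then have "(4::nat) ^ (k ^ 4 + (k + 1)) \<le> 4 ^ (Suc k ^ 4)" by (rule power_increasing) simp
  then show ?thesis by (simp add: block_start_def power_add mult.commute)
qed

lemma strict_mono_block_start: "strict_mono block_start"
proof (rule strict_monoI_Suc)
  fix k
  have "1 * block_start k < 4 ^ (k + 1) * block_start k"
    using block_start_pos[of k] by (intro mult_strict_right_mono one_less_power) auto
  then show "block_start k < block_start (Suc k)" using block_start_Suc_ge[of k] by linarith
qed

lemma block_point_before_next_start:
  assumes "block_point j" "j < block_start (Suc k)"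
  shows "j < k * block_start k"
proof -
  obtain k' where k': "block_start k' \<le> j" "j < k' * block_start k'"
    using assms(1) by (auto simp: block_point_def)
  have "k' \<le> k"
  proof (rule ccontr)
    assume "\<not> k' \<le> k"
    then have "block_start (Suc k) \<le> block_start k'"
      using strict_mono_block_start by (simp add: strict_mono_less_eq)
    then show False using k' assms(2) by simp
  qed
  then have "k' * block_start k' \<le> k * block_start k"
    using strict_mono_block_start by (intro mult_le_mono) (auto simp: strict_mono_less_eq)
  then show ?thesis using k' by simp
qed

lemma block_point_average_tendsto_zeros:
  assumes "continuous_on UNIV f"
  shows "(\<lambda>k. 1 / real (block_start (Suc k)) *
           (\<Sum>n=1..block_start (Suc k). f ((shift ^^ (n - 1)) block_point))) \<longlonglongrightarrow> f (\<lambda>_. False)"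
proof (rule orbit_average_tendsto[OF assms])
  fix m
  let ?bad = "\<lambda>k. card {n\<in>{1..block_start (Suc k)}. \<not> (\<forall>i<m. block_point (i + (n - 1)) = False)}"
  have upper: "real (?bad k) / real (block_start (Suc k)) \<le> (real k + real m) / 4 ^ (k + 1)" for k
  proof (rule divide_le_of_linear_bound)
    have "?bad k \<le> k * block_start k + m"
      by (rule card_window_mismatch_le) (simp add: block_point_before_next_start)
    then have "real (?bad k) \<le> real (k * block_start k + m)" by (simp only: of_nat_le_iff)
    then show "real (?bad k) \<le> real k * real (block_start k) + real m" by simp
    have "real (4 ^ (k + 1) * block_start k) \<le> real (block_start (Suc k))"
      using block_start_Suc_ge[of k] by (simp only: of_nat_le_iff)
    then show "4 ^ (k + 1) * real (block_start k) \<le> real (block_start (Suc k))" by simp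
    show "1 \<le> real (block_start k)" using block_start_pos[of k] by simp
  qed auto
  have lim: "(\<lambda>k. (real k + real m) / 4 ^ (k + 1)) \<longlonglongrightarrow> 0" by real_asymp
  show "(\<lambda>k. real (?bad k) / real (block_start (Suc k))) \<longlonglongrightarrow> 0"
    by (rule tendsto_sandwich[OF _ _ tendsto_const lim])
      (intro always_eventually allI upper divide_nonneg_nonneg of_nat_0_le_iff)+
qed (simp add: block_start_pos)

lemma block_point_average_tendsto_ones:
  assumes "continuous_on UNIV f"
  shows "(\<lambda>k. 1 / real (Suc k * block_start (Suc k)) *
           (\<Sum>n=1..Suc k * block_start (Suc k). f ((shift ^^ (n - 1)) block_point))) \<longlonglongrightarrow> f (\<lambda>_. True)"
proof (rule orbit_average_tendsto[OF assms])
  fix m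
  let ?bad = "\<lambda>k. card {n\<in>{1..Suc k * block_start (Suc k)}. \<not> (\<forall>i<m. block_point (i + (n - 1)) = True)}"
  have upper: "real (?bad k) / real (Suc k * block_start (Suc k)) \<le> (1 + real m) / (real k + 1)" for k
  proof (rule divide_le_of_linear_bound)
    have "?bad k \<le> block_start (Suc k) + m"
      by (rule card_window_mismatch_le) (meson block_point_def not_less)
    then show "real (?bad k) \<le> 1 * real (block_start (Suc k)) + real m" by simp
    show "(real k + 1) * real (block_start (Suc k)) \<le> real (Suc k * block_start (Suc k))"
      by (simp add: algebra_simps)
    show "1 \<le> real (block_start (Suc k))" using block_start_pos[of "Suc k"] by simp
  qed auto
  have lim: "(\<lambda>k. (1 + real m) / (real k + 1)) \<longlonglongrightarrow> 0" by real_asymp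
  show "(\<lambda>k. real (?bad k) / real (Suc k * block_start (Suc k))) \<longlonglongrightarrow> 0"
    by (rule tendsto_sandwich[OF _ _ tendsto_const lim])
      (intro always_eventually allI upper divide_nonneg_nonneg of_nat_0_le_iff)+
qed (simp add: block_start_pos)

lemma le_sqrt_sqrt_ln_if_block_start_less:
  assumes "block_start k < M"
  shows "real k \<le> sqrt (sqrt (ln (real M)))"
proof -
  have ln_nonneg: "0 \<le> ln (real M)" using assms block_start_pos[of k] by simp
  have "real k ^ 4 \<le> real k ^ 4 * ln 4"
    using ln_ge_iff[of 4 1] exp_le by (simp add: mult_le_cancel_left1)
  also have "\<dots> = ln (real (block_start k))" by (simp add: block_start_def ln_realpow)
  also have "\<dots> \<le> ln (real M)" using assms block_start_pos[of k] by simp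
  also have "\<dots> = (sqrt (sqrt (ln (real M))) ^ 2) ^ 2"
    using ln_nonneg by simp
  also have "\<dots> = sqrt (sqrt (ln (real M))) ^ 4"
    by (simp flip: power_mult)
  finally show ?thesis using ln_nonneg by (subst (asm) power_mono_iff) auto
qed

lemma block_weight_le:
  "(\<Sum>j<M. if block_start k \<le> j \<and> j < k * block_start k then 1 / real (block_start k) else 0)
     \<le> real k"
proof -
  have "(\<Sum>j<M. if block_start k \<le> j \<and> j < k * block_start k then 1 / real (block_start k) else 0)
      = (\<Sum>j\<in>{..<M} \<inter> {block_start k..<k * block_start k}. 1 / real (block_start k))"
    by (subst sum.inter_restrict) auto
  also have "\<dots> \<le> (\<Sum>j\<in>{block_start k..<k * block_start k}. 1 / real (block_start k))"
    by (intro sum_mono2) auto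
  also have "\<dots> = real (k * block_start k - block_start k) / real (block_start k)"
    by simp
  also have "\<dots> \<le> real (k * block_start k) / real (block_start k)"
    by (intro divide_right_mono of_nat_mono) auto
  also have "\<dots> = real k" using block_start_pos[of k] by simp
  finally show ?thesis .
qed

lemma block_point_log_weight_le:
  assumes "M \<ge> 1"
  shows "(\<Sum>j<M. if block_point j then 1 / (real j + 1) else 0)
           \<le> sqrt (ln (real M)) + sqrt (sqrt (ln (real M)))"
proof -
  define r where "r = sqrt (sqrt (ln (real M)))"
  define K where "K = nat \<lfloor>r\<rfloor>"
  define g where "g k j = (if block_start k \<le> j \<and> j < k * block_start k then 1 / real (block_start k) else 0)"
    for k j
  have r_nonneg: "r \<ge> 0" using assms by (simp add: r_def)
  have K_le: "real K \<le> r" using r_nonneg by (simp add: K_def)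
  have pointwise: "(if block_point j then 1 / (real j + 1) else 0) \<le> (\<Sum>k\<le>K. g k j)" if "j < M" for j
  proof (cases "block_point j")
    case True
    then obtain k where k: "block_start k \<le> j" "j < k * block_start k"
      by (auto simp: block_point_def)
    have "real k \<le> r"
      using le_sqrt_sqrt_ln_if_block_start_less[of k M] k(1) \<open>j < M\<close> by (simp add: r_def)
    then have "k \<le> K" by (simp add: K_def le_nat_floor)
    have "1 / (real j + 1) \<le> g k j"
      using k block_start_pos[of k] by (simp add: g_def frac_le)
    also have "\<dots> \<le> (\<Sum>k\<le>K. g k j)"
      using \<open>k \<le> K\<close> by (intro member_le_sum) (auto simp: g_def)
    finally show ?thesis using True by simp
  qed (simp add: g_def sum_nonneg)
  have block_weight: "(\<Sum>j<M. g k j) \<le> r" if "k \<le> K" for k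
    using block_weight_le[of k M] that K_le unfolding g_def by linarith
  have "(\<Sum>j<M. if block_point j then 1 / (real j + 1) else 0) \<le> (\<Sum>j<M. \<Sum>k\<le>K. g k j)"
    by (intro sum_mono pointwise) simp
  also have "\<dots> = (\<Sum>k\<le>K. \<Sum>j<M. g k j)" by (rule sum.swap)
  also have "\<dots> \<le> (\<Sum>k\<le>K. r)" by (intro sum_mono block_weight) simp
  also have "\<dots> = (real K + 1) * r" by simp
  also have "\<dots> \<le> (r + 1) * r" using K_le r_nonneg by (intro mult_right_mono) auto
  also have "\<dots> = sqrt (ln (real M)) + r" using assms by (simp add: r_def algebra_simps)
  finally show ?thesis by (simp add: r_def)
qed

lemma block_point_log_average_tendsto:
  assumes f: "continuous_on UNIV f"
  shows "(\<lambda>N. 1 / ln (real N) * (\<Sum>n=1..N. 1 / real n * f ((shift ^^ (n - 1)) block_point)))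
           \<longlonglongrightarrow> f (\<lambda>_. False)"
proof -
  have "(\<lambda>k. 1 / ln (real (k + 2)) * (\<Sum>n=1..k + 2. 1 / real n * f ((shift ^^ (n - 1)) block_point)))
          \<longlonglongrightarrow> f (\<lambda>_. False)"
  proof (rule orbit_weighted_average_tendsto[OF f])
    show "(\<lambda>k. (\<Sum>n=1..k + 2. 1 / real n) / ln (real (k + 2))) \<longlonglongrightarrow> 1"
      using LIMSEQ_ignore_initial_segment[OF harm_div_ln_tendsto, of 2]
      by (simp add: harm_def inverse_eq_divide)
    fix m
    let ?bad = "\<lambda>k. (\<Sum>n\<in>{n\<in>{1..k + 2}. \<not> (\<forall>i<m. block_point (i + (n - 1)) = False)}. 1 / real n)"
    let ?L = "\<lambda>k. ln (real (k + 2 + m))"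
    have upper: "?bad k / ln (real (k + 2)) \<le> real m * real m * (sqrt (?L k) + sqrt (sqrt (?L k))) / ln (real (k + 2))"
      for k
    proof -
      have "?bad k \<le> real m * real m *
          (\<Sum>j<k + 2 + m. if block_point j then 1 / (real j + 1) else 0)"
        by (rule log_weight_window_hits_le)
      also have "\<dots> \<le> real m * real m * (sqrt (?L k) + sqrt (sqrt (?L k)))"
        using block_point_log_weight_le[of "k + 2 + m"] by (intro mult_left_mono) auto
      finally show ?thesis by (rule divide_right_mono) simp
    qed
    have lim: "(\<lambda>k. real m * real m * (sqrt (?L k) + sqrt (sqrt (?L k))) / ln (real (k + 2))) \<longlonglongrightarrow> 0"
      by real_asymp
    show "(\<lambda>k. ?bad k / ln (real (k + 2))) \<longlonglongrightarrow> 0"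
      by (rule tendsto_sandwich[OF _ _ tendsto_const lim])
        (intro always_eventually allI upper divide_nonneg_nonneg sum_nonneg; simp)+
  qed auto
  then show ?thesis by (rule LIMSEQ_offset)
qed

lemma Vlog_block_point_subset_V: "Vlog block_point \<subseteq> V block_point"
proof
  fix \<nu> assume \<nu>: "\<nu> \<in> Vlog block_point"
  show "\<nu> \<in> V block_point"
  proof (rule V_memI)
    show "borel_prob \<nu>" using \<nu> by (simp add: Vlog_def)
    show "strict_mono (\<lambda>k. block_start (Suc k))"
      using strict_mono_block_start by (simp add: strict_mono_Suc_iff)
    show "block_start (Suc k) \<ge> 1" for k using block_start_pos[of "Suc k"] by simp
    fix f :: "cantor \<Rightarrow> real" assume f: "continuous_on UNIV f"
    show "(\<lambda>k. 1 / real (block_start (Suc k)) *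
            (\<Sum>n=1..block_start (Suc k). f ((shift ^^ (n - 1)) block_point))) \<longlonglongrightarrow> integral\<^sup>L \<nu> f"
      using block_point_average_tendsto_zeros[OF f]
      by (simp add: Vlog_integral_eq[OF \<nu> f block_point_log_average_tendsto[OF f]])
  qed
qed

lemma return_ones_in_V_block_point: "return borel (\<lambda>_. True) \<in> V block_point"
proof (rule V_memI)
  show "borel_prob (return borel (\<lambda>_. True))" by (simp add: borel_prob_def prob_space_return)
  show "strict_mono (\<lambda>k. Suc k * block_start (Suc k))"
  proof (rule strict_monoI_Suc)
    fix k
    have "block_start (Suc k) < block_start (Suc (Suc k))"
      using strict_mono_block_start by (simp add: strict_mono_Suc_iff)
    then show "Suc k * block_start (Suc k) < Suc (Suc k) * block_start (Suc (Suc k))"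
      using block_start_pos[of "Suc k"] by (intro mult_less_le_imp_less less_imp_le) simp_all
  qed
  show "Suc k * block_start (Suc k) \<ge> 1" for k using block_start_pos[of "Suc k"] by (simp add: Suc_le_eq)
  fix f :: "cantor \<Rightarrow> real" assume f: "continuous_on UNIV f"
  then show "(\<lambda>k. 1 / real (Suc k * block_start (Suc k)) *
      (\<Sum>n=1..Suc k * block_start (Suc k). f ((shift ^^ (n - 1)) block_point)))
        \<longlonglongrightarrow> integral\<^sup>L (return borel (\<lambda>_. True)) f"
    using block_point_average_tendsto_ones[OF f]
    by (simp add: integral_return borel_measurable_continuous_onI)
qed

lemma Vlog_block_point_first_coordinate_null:
  assumes \<nu>: "\<nu> \<in> Vlog block_point"
  shows "emeasure \<nu> {y. y 0} = 0"
proof -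
  have "borel_prob \<nu>" using \<nu> by (simp add: Vlog_def)
  then have prob: "prob_space \<nu>" and sets: "sets \<nu> = sets borel"
    by (simp_all add: borel_prob_def)
  have A: "{y :: cantor. y 0} \<in> sets \<nu>"
    using closed_coordinate_eq[of 0 True] sets by (simp add: borel_closed)
  have "measure \<nu> {y. y 0} = integral\<^sup>L \<nu> (indicator {y :: cantor. y 0})"
    using A prob by (simp add: prob_space.finite_measure finite_measure.emeasure_finite)
  also have "\<dots> = 0"
    using Vlog_integral_eq[OF \<nu> continuous_on_indicator_first_coordinate
        block_point_log_average_tendsto[OF continuous_on_indicator_first_coordinate]]
    by simp
  finally show ?thesis
    using prob by (simp add: prob_space_def finite_measure.emeasure_eq_measure)
qed

theorem proposition4p4:
  shows "\<exists>x :: cantor. ergodic_components (Vlog x) \<subset> ergodic_components (V x)"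
proof (intro exI psubsetI)
  show "ergodic_components (Vlog block_point) \<subseteq> ergodic_components (V block_point)"
    by (rule ergodic_components_mono[OF Vlog_block_point_subset_V])
  have "shift (\<lambda>_. True) = (\<lambda>_. True)" by (simp add: shift_def)
  then have "return borel (\<lambda>_. True) \<in> ergodic_components (V block_point)"
    using return_ones_in_V_block_point by (rule return_in_ergodic_components)
  moreover have "return borel (\<lambda>_. True) \<notin> ergodic_components (Vlog block_point)"
    by (rule return_notin_ergodic_components) (simp_all add: Vlog_block_point_first_coordinate_null)
  ultimately show "ergodic_components (Vlog block_point) \<noteq> ergodic_components (V block_point)"
    by blast
qed

end
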